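(* Let $X$ be a Banach lattice and $F_1,F_2\colon X^*\to\mathbb R\cup\{+\infty\}$ two proper functions such that $F_2\ll_{\mathrm Q}F_1$. Then $F_1^*\ll_{\mathrm P}F_2^*$. In particular, if $F\colon X^*\to\mathbb R\cup\{+\infty\}$ is a proper substitutable function, then $F^*\colon X\to\mathbb R\cup\{+\infty\}$ is submodular.
   Context: A Banach lattice is a Banach space with a lattice partial order (inf/sup $\wedge,\vee$) compatible with addition and nonnegative scaling and with $|\phi_1|\leq|\phi_2|\Rightarrow\|\phi_1\|\leq\|\phi_2\|$ ($\phi^+=\phi\vee0$, $\phi^-=-(\phi\wedge0)$, $|\phi|=\phi^++\phi^-$). $X^*$ carries the dual order ($\mu\leq\nu$ iff $\langle\mu,\phi\rangle\leq\langle\nu,\phi\rangle$ for all $\phi\geq0$); $[a,b]=\{m:a\leq m\leq b\}$. For $F\colon X^*\to\mathbb R\cup\{+\infty\}$, $F^*(\phi)=\sup_{\mu\in X^*}\langle\mu,\phi\rangle-F(\mu)$, $\phi\in X$. $F_2\ll_{\mathrm Q}F_1$ means: for all $\mu_1,\mu_2\in X^*$ and every $t_{21}\in[0,(\mu_2-\mu_1)^+]$ there exists $t_{12}\in[0,(\mu_1-\mu_2)^+]$ with $F_1(\mu_1+t_{21}-t_{12})+F_2(\mu_2-t_{21}+t_{12})\leq F_1(\mu_1)+F_2(\mu_2)$; substitutable means $F\ll_{\mathrm Q}F$. For $E_1,E_2$ on $X$, $E_1\ll_{\mathrm P}E_2$ means $E_1(\phi_1\wedge\phi_2)+E_2(\phi_1\vee\phi_2)\leq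 E_1(\phi_1)+E_2(\phi_2)$ for all $\phi_1,\phi_2$; submodular means $E\ll_{\mathrm P}E$. *)

theory Defs
  imports "HOL-Analysis.Analysis" "HOL-Library.Extended_Real"
begin

definition lat_pos :: "'a::{real_normed_vector,lattice} \<Rightarrow> 'a" where
  "lat_pos x = sup x 0"

definition lat_neg :: "'a::{real_normed_vector,lattice} \<Rightarrow> 'a" where
  "lat_neg x = - (inf x 0)"

definition lat_abs :: "'a::{real_normed_vector,lattice} \<Rightarrow> 'a" where
  "lat_abs x = lat_pos x + lat_neg x"

definition banach_lattice :: "'a::{banach,lattice} itself \<Rightarrow> bool" where
  "banach_lattice _ \<longleftrightarrow>
     (\<forall>x y z :: 'a. x \<le> y \<longrightarrow> x + z \<le> y + z) \<and>
     (\<forall>(x::'a) y (c::real). x \<le> y \<and> 0 \<le> c \<longrightarrow> c *\<^sub>R x \<le> c *\<^sub>R y) \<and>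
     (\<forall>x y :: 'a. lat_abs x \<le> lat_abs y \<longrightarrow> norm x \<le> norm y)"

definition dual_le :: "('a::{real_normed_vector,lattice} \<Rightarrow>\<^sub>L real) \<Rightarrow> ('a \<Rightarrow>\<^sub>L real) \<Rightarrow> bool" where
  "dual_le \<mu> \<nu> \<longleftrightarrow> (\<forall>\<phi>. 0 \<le> \<phi> \<longrightarrow> blinfun_apply \<mu> \<phi> \<le> blinfun_apply \<nu> \<phi>)"

definition dual_pos :: "('a::{real_normed_vector,lattice} \<Rightarrow>\<^sub>L real) \<Rightarrow> ('a \<Rightarrow>\<^sub>L real)" where
  "dual_pos \<mu> = (THE \<nu>. dual_le \<mu> \<nu> \<and> dual_le 0 \<nu> \<and>
                     (\<forall>\<rho>. dual_le \<mu> \<rho> \<and> dual_le 0 \<rho> \<longrightarrow> dual_le \<nu> \<rho>))"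

definition dual_interval :: "('a::{real_normed_vector,lattice} \<Rightarrow>\<^sub>L real) \<Rightarrow> ('a \<Rightarrow>\<^sub>L real) \<Rightarrow> ('a \<Rightarrow>\<^sub>L real) set" where
  "dual_interval a b = {m. dual_le a m \<and> dual_le m b}"

definition proper_fun :: "('b \<Rightarrow> ereal) \<Rightarrow> bool" where
  "proper_fun F \<longleftrightarrow> (\<forall>\<mu>. F \<mu> \<noteq> -\<infinity>) \<and> (\<exists>\<mu>. F \<mu> \<noteq> \<infinity>)"

definition conj_fun :: "(('a::{real_normed_vector,lattice} \<Rightarrow>\<^sub>L real) \<Rightarrow> ereal) \<Rightarrow> 'a \<Rightarrow> ereal" where
  "conj_fun F \<phi> = (SUP \<mu>. ereal (blinfun_apply \<mu> \<phi>) - F \<mu>)"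

definition Q_ll :: "(('a::{real_normed_vector,lattice} \<Rightarrow>\<^sub>L real) \<Rightarrow> ereal) \<Rightarrow> (('a \<Rightarrow>\<^sub>L real) \<Rightarrow> ereal) \<Rightarrow> bool" where
  "Q_ll F2 F1 \<longleftrightarrow>
     (\<forall>\<mu>1 \<mu>2. \<forall>t21 \<in> dual_interval 0 (dual_pos (\<mu>2 - \<mu>1)).
        \<exists>t12 \<in> dual_interval 0 (dual_pos (\<mu>1 - \<mu>2)).
          F1 (\<mu>1 + t21 - t12) + F2 (\<mu>2 - t21 + t12) \<le> F1 \<mu>1 + F2 \<mu>2)"

definition substitutable :: "(('a::{real_normed_vector,lattice} \<Rightarrow>\<^sub>L real) \<Rightarrow> ereal) \<Rightarrow> bool" where
  "substitutable F \<longleftrightarrow> Q_ll F F"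

definition P_ll :: "('a::lattice \<Rightarrow> ereal) \<Rightarrow> ('a \<Rightarrow> ereal) \<Rightarrow> bool" where
  "P_ll E1 E2 \<longleftrightarrow> (\<forall>\<phi>1 \<phi>2. E1 (inf \<phi>1 \<phi>2) + E2 (sup \<phi>1 \<phi>2) \<le> E1 \<phi>1 + E2 \<phi>2)"

definition submodular :: "('a::lattice \<Rightarrow> ereal) \<Rightarrow> bool" where
  "submodular E \<longleftrightarrow> P_ll E E"

end

theory Submission
  imports Defs "HOL-Library.Lattice_Algebras"
begin

(* Write \<psi> = \<phi>1 - \<phi>2 = \<psi>\<^sup>+ - \<psi>\<^sup>-, so that inf \<phi>1 \<phi>2 = \<phi>1 - \<psi>\<^sup>+ and sup \<phi>1 \<phi>2 = \<phi>2 + \<psi>\<^sup>+.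
   Fix \<mu>1, \<mu>2 with F1 \<mu>1, F2 \<mu>2 finite and put f = (\<mu>2 - \<mu>1)\<^sup>+, g = (\<mu>1 - \<mu>2)\<^sup>+.
   The Riesz-Kantorovich formula  t21 x = sup {f y | 0 \<le> y \<le> x, y in the ideal generated by \<psi>\<^sup>+}
   (for x \<ge> 0) defines t21 \<in> [0, f] with t21 \<psi>\<^sup>+ = f \<psi>\<^sup>+ and t21 \<psi>\<^sup>- = 0, since \<psi>\<^sup>- is disjoint
   from \<psi>\<^sup>+. For the t12 \<in> [0, g] provided by F2 <<_Q F1 we have t12 \<psi> \<le> g \<psi>\<^sup>+, and g \<le> f - (\<mu>2 - \<mu>1), so
     \<mu>1 (inf \<phi>1 \<phi>2) + \<mu>2 (sup \<phi>1 \<phi>2) = \<mu>1 \<phi>1 + \<mu>2 \<phi>2 + (\<mu>2 - \<mu>1) \<psi>\<^sup>+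
       \<le> (\<mu>1 + t21 - t12) \<phi>1 + (\<mu>2 - t21 + t12) \<phi>2.
   Subtracting F1 \<mu>1 + F2 \<mu>2 \<ge> F1 (\<mu>1 + t21 - t12) + F2 (\<mu>2 - t21 + t12) and taking suprema over
   \<mu>1, \<mu>2 gives F1\<^sup>* (inf \<phi>1 \<phi>2) + F2\<^sup>* (sup \<phi>1 \<phi>2) \<le> F1\<^sup>* \<phi>1 + F2\<^sup>* \<phi>2. *)

definition ideal_cone :: "'a::{real_vector,order} set \<Rightarrow> bool" where
  "ideal_cone K \<longleftrightarrow> 0 \<in> K \<and> (\<forall>y z. 0 \<le> z \<and> z \<le> y \<and> y \<in> K \<longrightarrow> z \<in> K) \<and>
     (\<forall>y\<in>K. \<forall>z\<in>K. y + z \<in> K) \<and> (\<forall>y\<in>K. \<forall>c>0. c *\<^sub>R y \<in> K)"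

definition principal_cone :: "'a::{real_vector,order} \<Rightarrow> 'a set" where
  "principal_cone p = {y. \<exists>s\<ge>0. y \<le> s *\<^sub>R p}"

definition kantorovich_sup :: "('a::{real_normed_vector,order} \<Rightarrow>\<^sub>L real) \<Rightarrow> 'a set \<Rightarrow> 'a \<Rightarrow> real" where
  "kantorovich_sup \<nu> K x = Sup (blinfun_apply \<nu> ` {y. 0 \<le> y \<and> y \<le> x \<and> y \<in> K})"

definition positive_extension :: "('a::{real_normed_vector,lattice} \<Rightarrow> real) \<Rightarrow> 'a \<Rightarrow> real" where
  "positive_extension P x = P (lat_pos x) - P (lat_neg x)"

definition kantorovich_component :: "('a::{real_normed_vector,lattice} \<Rightarrow>\<^sub>L real) \<Rightarrow> 'a set \<Rightarrow> ('a \<Rightarrow>\<^sub>L real)" where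
  "kantorovich_component \<nu> K = Blinfun (positive_extension (kantorovich_sup \<nu> K))"

lemma conj_fun_ge: "ereal (blinfun_apply \<mu> \<phi>) - F \<mu> \<le> conj_fun F \<phi>"
  unfolding conj_fun_def by (rule SUP_upper) simp

lemma ereal_SUP_add_SUP_le:
  fixes f g :: "'i \<Rightarrow> ereal"
  assumes le: "\<And>a b. f a + g b \<le> R" and a0: "f a0 \<noteq> -\<infinity>" and b0: "g b0 \<noteq> -\<infinity>"
  shows "(SUP a. f a) + (SUP b. g b) \<le> R"
proof -
  have finite_a: "f a + (SUP b. g b) \<le> R" if "f a \<noteq> -\<infinity>" for a
    using SUP_ereal_le_addI[of g "f a" R] le that by (simp add: add.commute)
  have "f a + (SUP b. g b) \<le> R" for a
  proof (cases "f a = -\<infinity>")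
    case True
    show ?thesis
    proof (cases "(SUP b. g b) = \<infinity>")
      case True
      then have "R = \<infinity>" using finite_a[OF a0] a0 by (cases "f a0") auto
      then show ?thesis by simp
    next
      case False
      then show ?thesis using \<open>f a = -\<infinity>\<close> by (cases "SUP b. g b") auto
    qed
  qed (rule finite_a)
  moreover have "(SUP b. g b) \<noteq> -\<infinity>"
    using b0 SUP_upper[of b0 UNIV g] by auto
  ultimately show ?thesis by (rule SUP_ereal_le_addI)
qed

context
  assumes banach_lattice: "banach_lattice TYPE('a::{banach,lattice})"
begin

interpretation vlat: lattice_ab_group_add "(+)" "0::'a" "(-)" uminus "(\<le>)" "(<)" inf sup
  using banach_lattice by unfold_locales (auto simp: banach_lattice_def add.commute)

interpretation ovs: ordered_real_vector "(+)" "0::'a" "(-)" uminus "(\<le>)" "(<)" "(*\<^sub>R)"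
proof unfold_locales
  show "a *\<^sub>R x \<le> b *\<^sub>R x" if "a \<le> b" "0 \<le> x" for a b and x :: 'a
  proof -
    have "0 \<le> (b - a) *\<^sub>R x"
      using banach_lattice that unfolding banach_lattice_def
      by (metis diff_ge_0_iff_ge scaleR_zero_right)
    then show ?thesis by (simp add: vlat.diff_ge_0_iff_ge scaleR_diff_left)
  qed
qed (use banach_lattice in \<open>auto simp: banach_lattice_def\<close>)

lemma lat_pos_minus_lat_neg: "lat_pos x - lat_neg x = (x::'a)"
  using vlat.prts[of x] by (simp add: lat_pos_def lat_neg_def vlat.pprt_def vlat.nprt_def)

lemma lat_pos_nonneg: "0 \<le> lat_pos (x::'a)"
  by (simp add: lat_pos_def)

lemma lat_neg_nonneg: "0 \<le> lat_neg (x::'a)"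
  by (simp add: lat_neg_def vlat.neg_0_le_iff_le)

lemma inf_lat_pos_lat_neg: "inf (lat_pos x) (lat_neg x) = (0::'a)"
proof -
  have "inf (lat_pos x) (lat_neg x) = inf (x + lat_neg x) (0 + lat_neg x)"
    using lat_pos_minus_lat_neg[of x] by (simp add: diff_eq_eq)
  also have "\<dots> = inf x 0 + lat_neg x" by (rule vlat.add_inf_distrib_right[symmetric])
  also have "\<dots> = 0" by (simp only: lat_neg_def right_minus)
  finally show ?thesis .
qed

lemma sup_eq_add_lat_pos: "sup \<phi>1 \<phi>2 = \<phi>2 + lat_pos (\<phi>1 - \<phi>2 :: 'a)"
  by (simp add: lat_pos_def vlat.add_sup_distrib_left)

lemma inf_eq_diff_lat_pos: "inf \<phi>1 \<phi>2 = \<phi>1 - lat_pos (\<phi>1 - \<phi>2 :: 'a)"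
  by (simp add: lat_pos_def vlat.diff_sup_eq_inf vlat.add_inf_distrib_left inf.commute)

lemma norm_mono_nonneg:
  assumes "0 \<le> y" "y \<le> (x::'a)"
  shows "norm y \<le> norm x"
proof -
  have "lat_abs z = z" if "0 \<le> z" for z :: 'a
    using that by (simp add: lat_abs_def lat_pos_def lat_neg_def sup.absorb1 inf.absorb2)
  then show ?thesis
    using banach_lattice assms order_trans[OF assms] unfolding banach_lattice_def by metis
qed

lemma norm_lat_pos_le: "norm (lat_pos x) \<le> norm (x::'a)"
  and norm_lat_neg_le: "norm (lat_neg x) \<le> norm (x::'a)"
proof -
  have "lat_pos x \<le> lat_abs x" "lat_neg x \<le> lat_abs x"
    using lat_neg_nonneg[of x] by (simp_all add: lat_abs_def lat_pos_def vlat.add_increasing2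
      vlat.add_increasing)
  then have "lat_abs (lat_pos x) \<le> lat_abs x" "lat_abs (lat_neg x) \<le> lat_abs x"
    using lat_neg_nonneg[of x]
    by (simp_all add: lat_abs_def lat_pos_def lat_neg_def sup.absorb1 inf.absorb2)
  then show "norm (lat_pos x) \<le> norm x" "norm (lat_neg x) \<le> norm x"
    using banach_lattice unfolding banach_lattice_def by blast+
qed

lemma riesz_decomposition:
  assumes "0 \<le> y" "y \<le> x1 + x2" "0 \<le> x1" "0 \<le> (x2::'a)"
  obtains y1 y2 where "y = y1 + y2" "0 \<le> y1" "y1 \<le> x1" "0 \<le> y2" "y2 \<le> x2"
proof
  show "y = inf y x1 + (y - inf y x1)" by (metis add.commute diff_add_cancel)
  show "0 \<le> y - inf y x1" by (metis inf.cobounded1 vlat.diff_ge_0_iff_ge)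
  show "0 \<le> inf y x1" "inf y x1 \<le> x1" using assms by auto
  have "y - inf y x1 = sup 0 (y - x1)"
    by (simp add: vlat.diff_inf_eq_sup vlat.add_sup_distrib_left)
  also have "\<dots> \<le> x2"
    using assms by (simp add: vlat.diff_le_eq add.commute)
  finally show "y - inf y x1 \<le> x2" .
qed

lemma disjoint_le_scaleR_imp_zero:
  assumes disj: "inf p n = (0::'a)" and y: "0 \<le> y" "y \<le> n" "y \<le> s *\<^sub>R p" and s: "0 \<le> s"
  shows "y = 0"
proof -
  define c where "c = max 1 s"
  have c: "1 \<le> c" "0 < c" "s \<le> c" unfolding c_def by auto
  have "0 \<le> p" "0 \<le> n" using disj by (metis inf.cobounded1 inf.cobounded2)+
  have "n \<le> c *\<^sub>R n"
    using ovs.scaleR_right_mono[OF c(1) \<open>0 \<le> n\<close>] by simp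
  moreover have "s *\<^sub>R p \<le> c *\<^sub>R p"
    using ovs.scaleR_right_mono[OF c(3) \<open>0 \<le> p\<close>] .
  ultimately have "y /\<^sub>R c \<le> n" "y /\<^sub>R c \<le> p"
    using y c by (auto simp: ovs.pos_divideR_le_eq intro: order_trans)
  then have "y /\<^sub>R c \<le> 0" using disj by (metis le_inf_iff)
  then have "y \<le> 0" using c by (simp add: ovs.pos_divideR_le_eq)
  then show ?thesis using y by simp
qed

lemma ideal_cone_UNIV: "ideal_cone (UNIV :: 'a set)"
  by (simp add: ideal_cone_def)

lemma ideal_cone_principal_cone:
  assumes "0 \<le> (p::'a)"
  shows "ideal_cone (principal_cone p)"
  unfolding ideal_cone_def principal_cone_def
proof (intro conjI allI impI ballI; clarsimp)
  show "\<exists>s\<ge>0. 0 \<le> s *\<^sub>R p" using assms by (intro exI[of _ 0]) simp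
  show "\<exists>s\<ge>0. z \<le> s *\<^sub>R p" if "0 \<le> z" "z \<le> y" "0 \<le> s" "y \<le> s *\<^sub>R p" for y z s
    using that order_trans by blast
  show "\<exists>u\<ge>0. y + z \<le> u *\<^sub>R p" if "0 \<le> s" "y \<le> s *\<^sub>R p" "0 \<le> t" "z \<le> t *\<^sub>R p" for y z s t
    using that vlat.add_mono[of y "s *\<^sub>R p" z "t *\<^sub>R p"]
    by (intro exI[of _ "s + t"]) (simp add: scaleR_add_left)
  show "\<exists>u\<ge>0. c *\<^sub>R y \<le> u *\<^sub>R p" if "0 < c" "0 \<le> s" "y \<le> s *\<^sub>R p" for y c s
    using that ovs.scaleR_left_mono[of y "s *\<^sub>R p" c] by (intro exI[of _ "c * s"]) simp
qed

lemma blinfun_le_norm_mult_norm_of_le: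
  assumes "0 \<le> y" "y \<le> (x::'a)"
  shows "blinfun_apply \<nu> y \<le> norm \<nu> * norm x"
proof -
  have "blinfun_apply \<nu> y \<le> norm \<nu> * norm y"
    using norm_blinfun[of \<nu> y] by simp
  also have "\<dots> \<le> norm \<nu> * norm x"
    using norm_mono_nonneg[OF assms] by (simp add: mult_left_mono)
  finally show ?thesis .
qed

lemma kantorovich_sup_upper:
  assumes "0 \<le> y" "y \<le> (x::'a)" "y \<in> K"
  shows "blinfun_apply \<nu> y \<le> kantorovich_sup \<nu> K x"
  unfolding kantorovich_sup_def
proof (rule cSup_upper)
  show "bdd_above (blinfun_apply \<nu> ` {y. 0 \<le> y \<and> y \<le> x \<and> y \<in> K})"
    using blinfun_le_norm_mult_norm_of_le by (intro bdd_aboveI2) blast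
qed (use assms in auto)

lemma kantorovich_sup_least:
  assumes "0 \<in> K" "0 \<le> (x::'a)"
    and "\<And>y. 0 \<le> y \<Longrightarrow> y \<le> x \<Longrightarrow> y \<in> K \<Longrightarrow> blinfun_apply \<nu> y \<le> B"
  shows "kantorovich_sup \<nu> K x \<le> B"
  unfolding kantorovich_sup_def by (rule cSup_least) (use assms in auto)

lemma kantorovich_sup_nonneg:
  assumes "0 \<in> K" "0 \<le> (x::'a)"
  shows "0 \<le> kantorovich_sup \<nu> K x"
  using kantorovich_sup_upper[of 0 x K \<nu>] assms by simp

lemma kantorovich_sup_le_norm:
  assumes "0 \<in> K" "0 \<le> (x::'a)"
  shows "kantorovich_sup \<nu> K x \<le> norm \<nu> * norm x"
  using assms blinfun_le_norm_mult_norm_of_le by (intro kantorovich_sup_least) auto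

lemma kantorovich_sup_add_le:
  assumes K: "ideal_cone K" and x: "0 \<le> (x1::'a)" "0 \<le> x2"
  shows "kantorovich_sup \<nu> K (x1 + x2) \<le> kantorovich_sup \<nu> K x1 + kantorovich_sup \<nu> K x2"
proof (rule kantorovich_sup_least)
  show "0 \<in> K" using K by (simp add: ideal_cone_def)
  show "0 \<le> x1 + x2" using x by (rule vlat.add_nonneg_nonneg)
  fix y assume y: "0 \<le> y" "y \<le> x1 + x2" "y \<in> K"
  obtain y1 y2 where y12: "y = y1 + y2" "0 \<le> y1" "y1 \<le> x1" "0 \<le> y2" "y2 \<le> x2"
    using riesz_decomposition[OF y(1,2) x] .
  then have "y1 \<le> y" "y2 \<le> y" using vlat.add_increasing vlat.add_increasing2 by auto
  with y12 have "y1 \<in> K" "y2 \<in> K" using K y(3) unfolding ideal_cone_def by blast+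
  then have "blinfun_apply \<nu> y1 + blinfun_apply \<nu> y2
      \<le> kantorovich_sup \<nu> K x1 + kantorovich_sup \<nu> K x2"
    using y12 by (intro add_mono kantorovich_sup_upper)
  then show "blinfun_apply \<nu> y \<le> kantorovich_sup \<nu> K x1 + kantorovich_sup \<nu> K x2"
    by (simp add: y12(1) blinfun.add_right)
qed

lemma kantorovich_sup_add_ge:
  assumes K: "ideal_cone K" and x: "0 \<le> (x1::'a)" "0 \<le> x2"
  shows "kantorovich_sup \<nu> K x1 + kantorovich_sup \<nu> K x2 \<le> kantorovich_sup \<nu> K (x1 + x2)"
proof -
  have K0: "0 \<in> K" and K_add: "\<And>y z. y \<in> K \<Longrightarrow> z \<in> K \<Longrightarrow> y + z \<in> K"
    using K unfolding ideal_cone_def by blast+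
  have "kantorovich_sup \<nu> K x1 \<le> kantorovich_sup \<nu> K (x1 + x2) - kantorovich_sup \<nu> K x2"
  proof (rule kantorovich_sup_least[OF K0 x(1)])
    fix y1 assume y1: "0 \<le> y1" "y1 \<le> x1" "y1 \<in> K"
    have "kantorovich_sup \<nu> K x2 \<le> kantorovich_sup \<nu> K (x1 + x2) - blinfun_apply \<nu> y1"
    proof (rule kantorovich_sup_least[OF K0 x(2)])
      fix y2 assume y2: "0 \<le> y2" "y2 \<le> x2" "y2 \<in> K"
      have "blinfun_apply \<nu> (y1 + y2) \<le> kantorovich_sup \<nu> K (x1 + x2)"
        using y1 y2 by (intro kantorovich_sup_upper vlat.add_nonneg_nonneg vlat.add_mono K_add)
      then show "blinfun_apply \<nu> y2 \<le> kantorovich_sup \<nu> K (x1 + x2) - blinfun_apply \<nu> y1"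
        by (simp add: blinfun.add_right)
    qed
    then show "blinfun_apply \<nu> y1 \<le> kantorovich_sup \<nu> K (x1 + x2) - kantorovich_sup \<nu> K x2"
      by simp
  qed
  then show ?thesis by simp
qed

lemma kantorovich_sup_add:
  assumes "ideal_cone K" "0 \<le> (x1::'a)" "0 \<le> x2"
  shows "kantorovich_sup \<nu> K (x1 + x2) = kantorovich_sup \<nu> K x1 + kantorovich_sup \<nu> K x2"
  using kantorovich_sup_add_le[OF assms] kantorovich_sup_add_ge[OF assms] by (rule antisym)

lemma kantorovich_sup_scaleR_le:
  assumes K: "ideal_cone K" and x: "0 \<le> (x::'a)" and c: "0 < c"
  shows "kantorovich_sup \<nu> K (c *\<^sub>R x) \<le> c * kantorovich_sup \<nu> K x"
proof (rule kantorovich_sup_least)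
  show "0 \<in> K" using K unfolding ideal_cone_def by simp
  show "0 \<le> c *\<^sub>R x" using ovs.scaleR_left_mono[OF x, of c] c by simp
  fix y assume y: "0 \<le> y" "y \<le> c *\<^sub>R x" "y \<in> K"
  have "y /\<^sub>R c \<in> K" using K y(3) c unfolding ideal_cone_def by simp
  moreover have "0 \<le> y /\<^sub>R c" using ovs.scaleR_left_mono[OF y(1), of "inverse c"] c by simp
  moreover have "y /\<^sub>R c \<le> x" using y(2) c by (simp add: ovs.pos_divideR_le_eq)
  ultimately have "blinfun_apply \<nu> (y /\<^sub>R c) \<le> kantorovich_sup \<nu> K x"
    by (rule kantorovich_sup_upper[rotated 2])
  then show "blinfun_apply \<nu> y \<le> c * kantorovich_sup \<nu> K x"
    using c by (simp add: blinfun.scaleR_right field_simps)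
qed

lemma kantorovich_sup_scaleR:
  assumes K: "ideal_cone K" and x: "0 \<le> (x::'a)" and c: "0 < c"
  shows "kantorovich_sup \<nu> K (c *\<^sub>R x) = c * kantorovich_sup \<nu> K x"
proof (rule antisym)
  show "kantorovich_sup \<nu> K (c *\<^sub>R x) \<le> c * kantorovich_sup \<nu> K x"
    using assms by (rule kantorovich_sup_scaleR_le)
  have "0 \<le> c *\<^sub>R x" using ovs.scaleR_left_mono[OF x, of c] c by simp
  then have "kantorovich_sup \<nu> K (inverse c *\<^sub>R (c *\<^sub>R x)) \<le> inverse c * kantorovich_sup \<nu> K (c *\<^sub>R x)"
    using K c by (intro kantorovich_sup_scaleR_le) auto
  then show "c * kantorovich_sup \<nu> K x \<le> kantorovich_sup \<nu> K (c *\<^sub>R x)"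
    using c by (simp add: field_simps)
qed

lemma positive_extension_diff:
  assumes add: "\<And>x y. 0 \<le> x \<Longrightarrow> 0 \<le> y \<Longrightarrow> P (x + y) = P x + P (y::'a)"
    and "0 \<le> a" "0 \<le> b"
  shows "positive_extension P (a - b) = P a - P b"
proof -
  have "lat_pos (a - b) + b = a + lat_neg (a - b)"
    using lat_pos_minus_lat_neg[of "a - b"] by (simp add: algebra_simps)
  then have "P (lat_pos (a - b)) + P b = P a + P (lat_neg (a - b))"
    using add assms(2,3) lat_pos_nonneg lat_neg_nonneg by metis
  then show ?thesis unfolding positive_extension_def by simp
qed

lemma positive_extension_eq:
  assumes "\<And>x y. 0 \<le> x \<Longrightarrow> 0 \<le> y \<Longrightarrow> P (x + y) = P x + P (y::'a)" and "0 \<le> x"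
  shows "positive_extension P x = P x"
proof -
  have "P 0 = 0" using assms(1)[of 0 0] by simp
  then show ?thesis using positive_extension_diff[OF assms(1) assms(2) order_refl] by simp
qed

lemma positive_extension_add:
  assumes add: "\<And>x y. 0 \<le> x \<Longrightarrow> 0 \<le> y \<Longrightarrow> P (x + y) = P x + P (y::'a)"
  shows "positive_extension P (x + y) = positive_extension P x + positive_extension P y"
proof -
  have "x + y = (lat_pos x + lat_pos y) - (lat_neg x + lat_neg y)"
    by (subst (1 2) lat_pos_minus_lat_neg[symmetric]) (simp add: algebra_simps)
  then show ?thesis
    using positive_extension_diff[OF add] add lat_pos_nonneg lat_neg_nonneg
    by (simp add: vlat.add_nonneg_nonneg positive_extension_def)
qed

lemma positive_extension_uminus:
  assumes add: "\<And>x y. 0 \<le> x \<Longrightarrow> 0 \<le> y \<Longrightarrow> P (x + y) = P x + P (y::'a)"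
  shows "positive_extension P (- x) = - positive_extension P x"
proof -
  have "- x = lat_neg x - lat_pos x" by (subst lat_pos_minus_lat_neg[symmetric]) simp
  then show ?thesis
    using positive_extension_diff[OF add lat_neg_nonneg lat_pos_nonneg]
    by (simp add: positive_extension_def)
qed

lemma positive_extension_scaleR:
  assumes add: "\<And>x y. 0 \<le> x \<Longrightarrow> 0 \<le> y \<Longrightarrow> P (x + y) = P x + P (y::'a)"
    and scale: "\<And>c x. 0 \<le> x \<Longrightarrow> 0 < c \<Longrightarrow> P (c *\<^sub>R x) = c * P x"
  shows "positive_extension P (r *\<^sub>R x) = r * positive_extension P x"
proof -
  have hom: "positive_extension P (c *\<^sub>R x) = c * positive_extension P x" if "0 < c" for c x
  proof -
    have "c *\<^sub>R x = c *\<^sub>R lat_pos x - c *\<^sub>R lat_neg x"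
      by (subst lat_pos_minus_lat_neg[symmetric]) (simp add: scaleR_diff_right)
    then show ?thesis
      using that positive_extension_diff[OF add] scale lat_pos_nonneg lat_neg_nonneg
        ovs.scaleR_left_mono[of 0 _ c]
      by (simp add: positive_extension_def right_diff_distrib)
  qed
  show ?thesis
  proof (cases r "0::real" rule: linorder_cases)
    case less
    then show ?thesis using hom[of "- r" "- x"] positive_extension_uminus[OF add] by simp
  next
    case equal
    have "P 0 = 0" using add[of 0 0] by simp
    then show ?thesis using equal by (simp add: positive_extension_def lat_pos_def lat_neg_def)
  qed (use hom in simp)
qed

lemma norm_positive_extension_le:
  assumes bound: "\<And>x. 0 \<le> x \<Longrightarrow> \<bar>P x\<bar> \<le> B * norm (x::'a)" and "0 \<le> B"
  shows "norm (positive_extension P x) \<le> norm x * (2 * B)"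
proof -
  have "norm (positive_extension P x) \<le> \<bar>P (lat_pos x)\<bar> + \<bar>P (lat_neg x)\<bar>"
    unfolding positive_extension_def by simp
  also have "\<dots> \<le> B * norm (lat_pos x) + B * norm (lat_neg x)"
    using bound lat_pos_nonneg lat_neg_nonneg by (intro add_mono) auto
  also have "\<dots> \<le> B * norm x + B * norm x"
    using norm_lat_pos_le norm_lat_neg_le \<open>0 \<le> B\<close> by (intro add_mono mult_left_mono) auto
  finally show ?thesis by (simp add: algebra_simps)
qed

lemma bounded_linear_positive_extension:
  assumes add: "\<And>x y. 0 \<le> x \<Longrightarrow> 0 \<le> y \<Longrightarrow> P (x + y) = P x + P (y::'a)"
    and scale: "\<And>c x. 0 \<le> x \<Longrightarrow> 0 < c \<Longrightarrow> P (c *\<^sub>R x) = c * P x"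
    and bound: "\<And>x. 0 \<le> x \<Longrightarrow> \<bar>P x\<bar> \<le> B * norm x" and "0 \<le> B"
  shows "bounded_linear (positive_extension P)"
  using positive_extension_add[OF add] positive_extension_scaleR[OF add scale]
    norm_positive_extension_le[OF bound \<open>0 \<le> B\<close>]
  by (intro bounded_linear_intro) auto

lemma kantorovich_component_apply:
  assumes K: "ideal_cone K" and x: "0 \<le> (x::'a)"
  shows "blinfun_apply (kantorovich_component \<nu> K) x = kantorovich_sup \<nu> K x"
proof -
  have K0: "0 \<in> K" using K by (simp add: ideal_cone_def)
  have add: "\<And>x y. 0 \<le> x \<Longrightarrow> 0 \<le> y \<Longrightarrow>
      kantorovich_sup \<nu> K (x + y) = kantorovich_sup \<nu> K x + kantorovich_sup \<nu> K y"
    using kantorovich_sup_add[OF K] .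
  have "bounded_linear (positive_extension (kantorovich_sup \<nu> K))"
  proof (rule bounded_linear_positive_extension[OF add])
    show "kantorovich_sup \<nu> K (c *\<^sub>R x) = c * kantorovich_sup \<nu> K x" if "0 \<le> x" "0 < c" for c x
      using kantorovich_sup_scaleR[OF K that] .
    show "\<bar>kantorovich_sup \<nu> K x\<bar> \<le> norm \<nu> * norm x" if "0 \<le> x" for x
      using kantorovich_sup_nonneg[OF K0 that] kantorovich_sup_le_norm[OF K0 that] by simp
  qed simp_all
  then have "blinfun_apply (kantorovich_component \<nu> K) = positive_extension (kantorovich_sup \<nu> K)"
    unfolding kantorovich_component_def by (rule bounded_linear_Blinfun_apply)
  then show ?thesis using positive_extension_eq[OF add x] by simp
qed

lemma blinfun_eqI_nonneg:
  assumes "\<And>x. 0 \<le> x \<Longrightarrow> blinfun_apply a x = blinfun_apply b (x::'a)"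
  shows "a = b"
proof (rule blinfun_eqI)
  fix x :: 'a
  have "blinfun_apply a x = blinfun_apply a (lat_pos x - lat_neg x)"
    by (simp only: lat_pos_minus_lat_neg)
  also have "\<dots> = blinfun_apply b (lat_pos x - lat_neg x)"
    by (simp only: blinfun.diff_right assms lat_pos_nonneg lat_neg_nonneg)
  also have "\<dots> = blinfun_apply b x"
    by (simp only: lat_pos_minus_lat_neg)
  finally show "blinfun_apply a x = blinfun_apply b x" .
qed

lemma dual_le_antisym: "dual_le a b \<Longrightarrow> dual_le b a \<Longrightarrow> a = (b :: 'a \<Rightarrow>\<^sub>L real)"
  unfolding dual_le_def by (intro blinfun_eqI_nonneg) (meson antisym)

lemma dual_nonneg_mono:
  assumes "dual_le 0 f" "y \<le> (x::'a)"
  shows "blinfun_apply f y \<le> blinfun_apply f x"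
proof -
  have "0 \<le> x - y" using assms(2) by simp
  then have "0 \<le> blinfun_apply f (x - y)" using assms(1) unfolding dual_le_def by simp
  then show ?thesis by (simp add: blinfun.diff_right)
qed

text \<open>Since \<^const>\<open>dual_pos\<close> is a definite description, the supremum of \<open>\<nu>\<close> and \<open>0\<close> has to be
  shown to exist; it is given by the Riesz-Kantorovich formula over the whole space.\<close>

lemma dual_pos_lub:
  fixes \<nu> :: "'a \<Rightarrow>\<^sub>L real"
  shows dual_pos_ge: "dual_le \<nu> (dual_pos \<nu>)"
    and dual_pos_nonneg: "dual_le 0 (dual_pos \<nu>)"
    and dual_pos_least: "\<And>\<rho>. dual_le \<nu> \<rho> \<Longrightarrow> dual_le 0 \<rho> \<Longrightarrow> dual_le (dual_pos \<nu>) \<rho>"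
proof -
  let ?lub = "\<lambda>m. dual_le \<nu> m \<and> dual_le 0 m \<and> (\<forall>\<rho>. dual_le \<nu> \<rho> \<and> dual_le 0 \<rho> \<longrightarrow> dual_le m \<rho>)"
  define L where "L = kantorovich_component \<nu> UNIV"
  have L: "blinfun_apply L x = kantorovich_sup \<nu> UNIV x" if "0 \<le> x" for x
    unfolding L_def using kantorovich_component_apply[OF ideal_cone_UNIV that] .
  have "?lub L"
  proof (intro conjI allI impI)
    show "dual_le \<nu> L" "dual_le 0 L"
      unfolding dual_le_def using L kantorovich_sup_upper kantorovich_sup_nonneg by auto
    show "dual_le L \<rho>" if "dual_le \<nu> \<rho> \<and> dual_le 0 \<rho>" for \<rho>
      unfolding dual_le_def
    proof (intro allI impI)
      fix x :: 'a assume "0 \<le> x"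
      have "kantorovich_sup \<nu> UNIV x \<le> blinfun_apply \<rho> x"
        using that \<open>0 \<le> x\<close> dual_nonneg_mono unfolding dual_le_def
        by (intro kantorovich_sup_least) (auto intro: order_trans)
      then show "blinfun_apply L x \<le> blinfun_apply \<rho> x" using L[OF \<open>0 \<le> x\<close>] by simp
    qed
  qed
  then have "?lub (dual_pos \<nu>)"
    unfolding dual_pos_def by (rule theI) (use \<open>?lub L\<close> dual_le_antisym in blast)
  then show "dual_le \<nu> (dual_pos \<nu>)" "dual_le 0 (dual_pos \<nu>)"
    "\<And>\<rho>. dual_le \<nu> \<rho> \<Longrightarrow> dual_le 0 \<rho> \<Longrightarrow> dual_le (dual_pos \<nu>) \<rho>"
    by blast+
qed

lemma dual_pos_uminus_le: "dual_le (dual_pos (- \<nu>)) (dual_pos \<nu> - (\<nu> :: 'a \<Rightarrow>\<^sub>L real))"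
  using dual_pos_ge[of \<nu>] dual_pos_nonneg[of \<nu>]
  by (intro dual_pos_least) (auto simp: dual_le_def blinfun.diff_left blinfun.minus_left)

lemma dual_interval_separates_disjoint:
  assumes f: "dual_le 0 f" and disj: "inf p n = (0::'a)"
  shows "\<exists>t\<in>dual_interval 0 f. blinfun_apply t p = blinfun_apply f p \<and> blinfun_apply t n = 0"
proof -
  have "0 \<le> p" "0 \<le> n" using disj by (metis inf.cobounded1 inf.cobounded2)+
  let ?K = "principal_cone p"
  have K: "ideal_cone ?K" by (rule ideal_cone_principal_cone[OF \<open>0 \<le> p\<close>])
  then have "0 \<in> ?K" by (simp add: ideal_cone_def)
  define t where "t = kantorovich_component f ?K"
  have t: "blinfun_apply t x = kantorovich_sup f ?K x" if "0 \<le> x" for x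
    unfolding t_def using kantorovich_component_apply[OF K that] .
  have t_nonneg: "0 \<le> blinfun_apply t x" if "0 \<le> x" for x
    using t[OF that] kantorovich_sup_nonneg[OF \<open>0 \<in> ?K\<close> that] by simp
  have t_le: "blinfun_apply t x \<le> blinfun_apply f x" if "0 \<le> x" for x
    using t[OF that] dual_nonneg_mono[OF f] kantorovich_sup_least[OF \<open>0 \<in> ?K\<close> that] by simp
  have "p \<in> ?K" unfolding principal_cone_def by (auto intro!: exI[of _ 1])
  then have "blinfun_apply f p \<le> blinfun_apply t p"
    using t[OF \<open>0 \<le> p\<close>] kantorovich_sup_upper[OF \<open>0 \<le> p\<close> order_refl] by simp
  moreover have "blinfun_apply t n \<le> 0"
  proof -
    have "kantorovich_sup f ?K n \<le> 0"
    proof (rule kantorovich_sup_least[OF \<open>0 \<in> ?K\<close> \<open>0 \<le> n\<close>])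
      fix y assume y: "0 \<le> y" "y \<le> n" "y \<in> ?K"
      then have "y = 0"
        unfolding principal_cone_def using disjoint_le_scaleR_imp_zero[OF disj y(1,2)] by blast
      then show "blinfun_apply f y \<le> 0" by simp
    qed
    then show ?thesis using t[OF \<open>0 \<le> n\<close>] by simp
  qed
  moreover have "t \<in> dual_interval 0 f"
    unfolding dual_interval_def dual_le_def using t_nonneg t_le by simp
  ultimately show ?thesis
    using t_le[OF \<open>0 \<le> p\<close>] t_nonneg[OF \<open>0 \<le> n\<close>] by (intro bexI[of _ t]) auto
qed

lemma pairing_inf_sup_le_exchange:
  fixes \<mu>1 \<mu>2 t21 t12 :: "'a \<Rightarrow>\<^sub>L real" and \<phi>1 \<phi>2 :: 'a
  defines "p \<equiv> lat_pos (\<phi>1 - \<phi>2)" and "n \<equiv> lat_neg (\<phi>1 - \<phi>2)"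
  assumes t21: "blinfun_apply t21 p = blinfun_apply (dual_pos (\<mu>2 - \<mu>1)) p" "blinfun_apply t21 n = 0"
    and t12: "t12 \<in> dual_interval 0 (dual_pos (\<mu>1 - \<mu>2))"
  shows "blinfun_apply \<mu>1 (inf \<phi>1 \<phi>2) + blinfun_apply \<mu>2 (sup \<phi>1 \<phi>2)
    \<le> blinfun_apply (\<mu>1 + t21 - t12) \<phi>1 + blinfun_apply (\<mu>2 - t21 + t12) \<phi>2"
proof -
  let ?f = "dual_pos (\<mu>2 - \<mu>1)" and ?g = "dual_pos (\<mu>1 - \<mu>2)"
  have "0 \<le> p" "0 \<le> n" unfolding p_def n_def by (rule lat_pos_nonneg lat_neg_nonneg)+
  have \<psi>: "\<phi>1 - \<phi>2 = p - n" unfolding p_def n_def by (rule lat_pos_minus_lat_neg[symmetric])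
  have "dual_le ?g (?f - (\<mu>2 - \<mu>1))"
    using dual_pos_uminus_le[of "\<mu>2 - \<mu>1"] by simp
  then have "blinfun_apply ?g p \<le> blinfun_apply (?f - (\<mu>2 - \<mu>1)) p"
    using \<open>0 \<le> p\<close> unfolding dual_le_def by blast
  then have \<nu>: "blinfun_apply (\<mu>2 - \<mu>1) p \<le> blinfun_apply ?f p - blinfun_apply ?g p"
    by (simp add: blinfun.diff_left)
  have "blinfun_apply t12 p \<le> blinfun_apply ?g p" "0 \<le> blinfun_apply t12 n"
    using t12 \<open>0 \<le> p\<close> \<open>0 \<le> n\<close> unfolding dual_interval_def dual_le_def by auto
  then have "blinfun_apply (\<mu>2 - \<mu>1) p \<le> blinfun_apply (t21 - t12) (\<phi>1 - \<phi>2)"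
    using \<nu> t21 unfolding \<psi> by (simp add: blinfun.diff_left blinfun.diff_right)
  moreover have "blinfun_apply \<mu>1 (inf \<phi>1 \<phi>2) + blinfun_apply \<mu>2 (sup \<phi>1 \<phi>2)
      = blinfun_apply \<mu>1 \<phi>1 + blinfun_apply \<mu>2 \<phi>2 + blinfun_apply (\<mu>2 - \<mu>1) p"
    unfolding inf_eq_diff_lat_pos sup_eq_add_lat_pos p_def
    by (simp add: blinfun.diff_right blinfun.add_right blinfun.diff_left)
  moreover have "blinfun_apply (\<mu>1 + t21 - t12) \<phi>1 + blinfun_apply (\<mu>2 - t21 + t12) \<phi>2
      = blinfun_apply \<mu>1 \<phi>1 + blinfun_apply \<mu>2 \<phi>2 + blinfun_apply (t21 - t12) (\<phi>1 - \<phi>2)"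
    by (simp add: blinfun.diff_right blinfun.add_left blinfun.diff_left algebra_simps)
  ultimately show ?thesis by linarith
qed

lemma conj_fun_exchange_le:
  assumes Q: "Q_ll F2 F1" and proper: "proper_fun F1" "proper_fun F2"
    and r1: "F1 \<mu>1 = ereal r1" and r2: "F2 \<mu>2 = ereal r2"
  shows "ereal (blinfun_apply \<mu>1 (inf \<phi>1 \<phi>2) - r1) + ereal (blinfun_apply \<mu>2 (sup \<phi>1 \<phi>2) - r2)
    \<le> conj_fun F1 \<phi>1 + conj_fun F2 (\<phi>2 :: 'a)"
proof -
  obtain t21 where t21: "t21 \<in> dual_interval 0 (dual_pos (\<mu>2 - \<mu>1))"
    "blinfun_apply t21 (lat_pos (\<phi>1 - \<phi>2)) = blinfun_apply (dual_pos (\<mu>2 - \<mu>1)) (lat_pos (\<phi>1 - \<phi>2))"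
    "blinfun_apply t21 (lat_neg (\<phi>1 - \<phi>2)) = 0"
    using dual_interval_separates_disjoint[OF dual_pos_nonneg inf_lat_pos_lat_neg] by blast
  then obtain t12 where t12: "t12 \<in> dual_interval 0 (dual_pos (\<mu>1 - \<mu>2))"
    and F_le: "F1 (\<mu>1 + t21 - t12) + F2 (\<mu>2 - t21 + t12) \<le> F1 \<mu>1 + F2 \<mu>2"
    using Q unfolding Q_ll_def by blast
  define m1 where "m1 = \<mu>1 + t21 - t12"
  define m2 where "m2 = \<mu>2 - t21 + t12"
  have "F1 m1 \<noteq> -\<infinity>" "F2 m2 \<noteq> -\<infinity>" using proper unfolding proper_fun_def by auto
  moreover have "F1 m1 + F2 m2 \<le> ereal (r1 + r2)" using F_le r1 r2 unfolding m1_def m2_def by simp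
  ultimately obtain a1 a2 where a: "F1 m1 = ereal a1" "F2 m2 = ereal a2" "a1 + a2 \<le> r1 + r2"
    by (cases "F1 m1"; cases "F2 m2") auto
  have "blinfun_apply \<mu>1 (inf \<phi>1 \<phi>2) + blinfun_apply \<mu>2 (sup \<phi>1 \<phi>2)
      \<le> blinfun_apply m1 \<phi>1 + blinfun_apply m2 \<phi>2"
    unfolding m1_def m2_def using pairing_inf_sup_le_exchange t21(2,3) t12 by blast
  then have "ereal (blinfun_apply \<mu>1 (inf \<phi>1 \<phi>2) - r1) + ereal (blinfun_apply \<mu>2 (sup \<phi>1 \<phi>2) - r2)
      \<le> (ereal (blinfun_apply m1 \<phi>1) - F1 m1) + (ereal (blinfun_apply m2 \<phi>2) - F2 m2)"
    using a by simp
  also have "\<dots> \<le> conj_fun F1 \<phi>1 + conj_fun F2 \<phi>2"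
    by (intro add_mono conj_fun_ge)
  finally show ?thesis .
qed

lemma P_ll_conj_fun:
  fixes F1 F2 :: "('a \<Rightarrow>\<^sub>L real) \<Rightarrow> ereal"
  assumes Q: "Q_ll F2 F1" and proper: "proper_fun F1" "proper_fun F2"
  shows "P_ll (conj_fun F1) (conj_fun F2)"
  unfolding P_ll_def
proof (intro allI)
  fix \<phi>1 \<phi>2 :: 'a
  define f where "f \<mu> = ereal (blinfun_apply \<mu> (inf \<phi>1 \<phi>2)) - F1 \<mu>" for \<mu>
  define g where "g \<mu> = ereal (blinfun_apply \<mu> (sup \<phi>1 \<phi>2)) - F2 \<mu>" for \<mu>
  have "f \<mu>1 + g \<mu>2 \<le> conj_fun F1 \<phi>1 + conj_fun F2 \<phi>2" for \<mu>1 \<mu>2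
  proof (cases "F1 \<mu>1 = \<infinity> \<or> F2 \<mu>2 = \<infinity>")
    case True
    then have "f \<mu>1 = -\<infinity> \<or> g \<mu>2 = -\<infinity>" unfolding f_def g_def by auto
    moreover have "f \<mu>1 \<noteq> \<infinity>" "g \<mu>2 \<noteq> \<infinity>"
      using proper unfolding proper_fun_def f_def g_def by (simp_all add: ereal_minus_eq_PInfty_iff)
    ultimately have "f \<mu>1 + g \<mu>2 = -\<infinity>" by simp
    then show ?thesis by (metis ereal_less_eq(2))
  next
    case False
    then obtain r1 r2 where "F1 \<mu>1 = ereal r1" "F2 \<mu>2 = ereal r2"
      using proper unfolding proper_fun_def by (metis ereal_cases)
    then show ?thesis unfolding f_def g_def using conj_fun_exchange_le[OF Q proper] by simp
  qed
  moreover obtain \<mu>0 \<mu>0' where "F1 \<mu>0 \<noteq> \<infinity>" "F2 \<mu>0' \<noteq> \<infinity>"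
    using proper unfolding proper_fun_def by blast
  then have "f \<mu>0 \<noteq> -\<infinity>" "g \<mu>0' \<noteq> -\<infinity>"
    unfolding f_def g_def by (simp_all add: ereal_diff_eq_MInfty_iff)
  ultimately show "conj_fun F1 (inf \<phi>1 \<phi>2) + conj_fun F2 (sup \<phi>1 \<phi>2) \<le> conj_fun F1 \<phi>1 + conj_fun F2 \<phi>2"
    unfolding conj_fun_def f_def g_def by (rule ereal_SUP_add_SUP_le)
qed

end

theorem theorem2p50:
  fixes F1 F2 :: "('a::{banach,lattice} \<Rightarrow>\<^sub>L real) \<Rightarrow> ereal"
  assumes "banach_lattice TYPE('a)"
    and "proper_fun F1" and "proper_fun F2"
    and "Q_ll F2 F1"
  shows "P_ll (conj_fun F1) (conj_fun F2)
         \<and> (\<forall>F :: ('a \<Rightarrow>\<^sub>L real) \<Rightarrow> ereal.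
               proper_fun F \<and> substitutable F \<longrightarrow> submodular (conj_fun F))"
  using P_ll_conj_fun[OF assms(1)] assms(2-4)
  unfolding substitutable_def submodular_def by blast

end
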